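(* Let $k\ge2$ and let $\mathcal C_1$ be the binary code with generator matrix $[I_k\ \tilde G_k]$. Then every erasure pattern with at most $k-1$ erasures allows for parallel easy repair.
   Context: $\tilde G_k$ denotes the $k\times\frac{k(k-1)}{2}$ binary matrix whose columns are all vectors of $\mathbb F_2^k$ of Hamming weight $2$; $\mathcal C_1$ has length $n=\frac{k(k+1)}{2}$ and minimum distance $k$. Let $g_1,\dots,g_n$ be the columns of $[I_k\ \tilde G_k]$; nodes are the coordinates $c_1,\dots,c_n$ of codewords $c=u[I_k\ \tilde G_k]$. An erasure pattern is a set of erased nodes; the others are live. A node $c_i$ is related to distinct nodes $c_{j_1},\dots,c_{j_\gamma}$ (all different from $c_i$) if $g_i=g_{j_1}+\dots+g_{j_\gamma}$. An erased node allows for easy repair if it is related to $\gamma\le 2$ live nodes. An erasure pattern allows for parallel easy repair if each erased node allows for easy repair with respect to the original set of live nodes. *)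

theory Defs
  imports Main "HOL-Library.Z2"
begin

text \<open>Vectors of F_2^k are modelled as functions nat => bit (only coordinates 0..k-1 are used).\<close>

definition unitv :: "nat \<Rightarrow> nat \<Rightarrow> bit" where
  "unitv a = (\<lambda>t. if t = a then 1 else 0)"

definition pairv :: "nat \<Rightarrow> nat \<Rightarrow> nat \<Rightarrow> bit" where
  "pairv a b = (\<lambda>t. if t = a \<or> t = b then 1 else 0)"

definition id_cols :: "nat \<Rightarrow> (nat \<Rightarrow> bit) list" where
  "id_cols k = map unitv [0..<k]"

text \<open>Columns of tilde G_k: all weight-2 vectors of F_2^k, each exactly once (a < b < k).\<close>
definition Gtilde_cols :: "nat \<Rightarrow> (nat \<Rightarrow> bit) list" where
  "Gtilde_cols k = concat (map (\<lambda>b. map (\<lambda>a. pairv a b) [0..<b]) [0..<k])"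

text \<open>Columns g_1, ..., g_n of the generator matrix [I_k tilde G_k] (0-indexed).\<close>
definition gen_cols :: "nat \<Rightarrow> (nat \<Rightarrow> bit) list" where
  "gen_cols k = id_cols k @ Gtilde_cols k"

definition code_len :: "nat \<Rightarrow> nat" where
  "code_len k = length (gen_cols k)"

definition g :: "nat \<Rightarrow> nat \<Rightarrow> nat \<Rightarrow> bit" where
  "g k i = gen_cols k ! i"

definition related :: "nat \<Rightarrow> nat \<Rightarrow> nat set \<Rightarrow> bool" where
  "related k i J \<longleftrightarrow> i < code_len k \<and> J \<subseteq> {..<code_len k} \<and> J \<noteq> {} \<and> i \<notin> J \<and>
     g k i = (\<lambda>t. \<Sum>j\<in>J. g k j t)"

definition live :: "nat \<Rightarrow> nat set \<Rightarrow> nat set" where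
  "live k E = {..<code_len k} - E"

definition easy_repair :: "nat \<Rightarrow> nat set \<Rightarrow> nat \<Rightarrow> bool" where
  "easy_repair k E i \<longleftrightarrow> (\<exists>J. related k i J \<and> card J \<le> 2 \<and> J \<subseteq> live k E)"

definition parallel_easy_repair :: "nat \<Rightarrow> nat set \<Rightarrow> bool" where
  "parallel_easy_repair k E \<longleftrightarrow> (\<forall>i\<in>E. easy_repair k E i)"

end

theory Submission
  imports Defs
begin

text \<open>Each column v of [I_k \<tilde>G_k] is a sum of two other columns in k - 1 ways whose
  pairs of summands are pairwise disjoint: e_a = e_c + (e_a + e_c) for c \<noteq> a, and
  e_a + e_b as the sum of e_a and e_b or as (e_a + e_c) + (e_b + e_c) for c \<notin> {a, b}.
  The at most k - 2 other erased nodes cannot meet all these pairs, so some pair is live.\<close>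

lemma unitv_eq_iff [simp]: "unitv a = unitv c \<longleftrightarrow> a = c"
  by (metis unitv_def one_neq_zero)

lemma unitv_neq_pairv [simp]:
  "a \<noteq> b \<Longrightarrow> unitv c \<noteq> pairv a b"
  "a \<noteq> b \<Longrightarrow> pairv a b \<noteq> unitv c"
  by (metis pairv_def unitv_def one_neq_zero)+

lemma pairv_eq_iff [simp]:
  "a \<noteq> b \<Longrightarrow> c \<noteq> d \<Longrightarrow> pairv a b = pairv c d \<longleftrightarrow> (a = c \<and> b = d \<or> a = d \<and> b = c)"
  unfolding pairv_def fun_eq_iff by (metis one_neq_zero)

lemma pairv_commute: "pairv a b = pairv b a"
  unfolding pairv_def by auto

lemma set_gen_cols:
  "set (gen_cols k) = {unitv a | a. a < k} \<union> {pairv a b | a b. a < b \<and> b < k}"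
  unfolding gen_cols_def id_cols_def Gtilde_cols_def by auto

lemma unitv_in_gen_cols: "a < k \<Longrightarrow> unitv a \<in> set (gen_cols k)"
  by (auto simp: set_gen_cols)

lemma pairv_in_gen_cols: "a \<noteq> b \<Longrightarrow> a < k \<Longrightarrow> b < k \<Longrightarrow> pairv a b \<in> set (gen_cols k)"
  by (cases a b rule: linorder_cases) (auto simp: set_gen_cols intro: exI[of _ b] pairv_commute)

lemma unitv_eq_add: "c \<noteq> a \<Longrightarrow> unitv a t = unitv c t + pairv a c t"
  by (simp add: unitv_def pairv_def)

lemma pairv_eq_add_unitv: "a \<noteq> b \<Longrightarrow> pairv a b t = unitv a t + unitv b t"
  by (simp add: unitv_def pairv_def)

lemma pairv_eq_add_pairv:
  "a \<noteq> b \<Longrightarrow> c \<noteq> a \<Longrightarrow> c \<noteq> b \<Longrightarrow> pairv a b t = pairv a c t + pairv b c t"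
  by (simp add: pairv_def)

lemma unitv_split_avoiding:
  assumes "a < k" "finite F" "card F < k - 1"
  obtains c where "c < k" "c \<noteq> a" "unitv c \<notin> F" "pairv a c \<notin> F"
proof -
  have "\<exists>c \<in> {..<k} - {a}. unitv c \<notin> F \<and> pairv a c \<notin> F"
  proof (rule ccontr)
    assume "\<not> ?thesis"
    then have "card ({..<k} - {a}) \<le> card F"
      by (intro card_le_if_inj_on_rel[where r = "\<lambda>c x. x \<in> {unitv c, pairv a c}"])
        (use \<open>finite F\<close> in auto)
    with assms show False by simp
  qed
  with that show thesis by blast
qed

lemma pairv_split_avoiding:
  assumes "a < b" "b < k" "finite F" "card F < k - 1"
  shows "unitv a \<notin> F \<and> unitv b \<notin> F \<or>
    (\<exists>c < k. c \<noteq> a \<and> c \<noteq> b \<and> pairv a c \<notin> F \<and> pairv b c \<notin> F)"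
proof -
  define S where "S c = (if c = a then {unitv a, unitv b} else {pairv a c, pairv b c})" for c
  have "\<exists>c \<in> {..<k} - {b}. S c \<inter> F = {}"
  proof (rule ccontr)
    assume "\<not> ?thesis"
    then have "card ({..<k} - {b}) \<le> card F"
      by (intro card_le_if_inj_on_rel[where r = "\<lambda>c x. x \<in> S c"])
        (use \<open>finite F\<close> \<open>a < b\<close> in \<open>auto simp: S_def split: if_splits\<close>)
    with assms show False by simp
  qed
  then show ?thesis
    by (metis (no_types, lifting) S_def Diff_iff disjoint_iff insert_iff lessThan_iff singletonI)
qed

lemma gen_col_split_avoiding:
  assumes "v \<in> set (gen_cols k)" "finite F" "card F < k - 1"
  obtains u w where "u \<in> set (gen_cols k)" "w \<in> set (gen_cols k)" "u \<noteq> w"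
    "u \<notin> insert v F" "w \<notin> insert v F" "\<And>t. v t = u t + w t"
proof -
  from assms(1) consider (unit) a where "a < k" "v = unitv a"
    | (pair) a b where "a < b" "b < k" "v = pairv a b"
    by (auto simp: set_gen_cols)
  then show thesis
  proof cases
    case unit
    then obtain c where "c < k" "c \<noteq> a" "unitv c \<notin> F" "pairv a c \<notin> F"
      using unitv_split_avoiding assms(2,3) by blast
    with unit show thesis
      using unitv_eq_add[of c a]
      by (intro that[of "unitv c" "pairv a c"]) (auto simp: unitv_in_gen_cols pairv_in_gen_cols)
  next
    case pair
    then consider "unitv a \<notin> F" "unitv b \<notin> F"
      | c where "c < k" "c \<noteq> a" "c \<noteq> b" "pairv a c \<notin> F" "pairv b c \<notin> F"
      using pairv_split_avoiding assms(2,3) by blast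
    then show thesis
    proof cases
      case 1
      with pair show thesis
        using pairv_eq_add_unitv[of a b]
        by (intro that[of "unitv a" "unitv b"]) (auto simp: unitv_in_gen_cols)
    next
      case (2 c)
      with pair show thesis
        using pairv_eq_add_pairv[of a b c]
        by (intro that[of "pairv a c" "pairv b c"]) (auto simp: pairv_in_gen_cols)
    qed
  qed
qed

lemma nth_index_of_gen_col:
  assumes "u \<in> set (gen_cols k)"
  obtains j where "j < code_len k" "g k j = u"
  using assms by (metis in_set_conv_nth g_def code_len_def)

lemma easy_repair_if_live_split:
  assumes "i \<in> E" "i < code_len k"
    and "u \<in> set (gen_cols k)" "w \<in> set (gen_cols k)" "u \<noteq> w"
    and "u \<notin> g k ` E" "w \<notin> g k ` E" "\<And>t. g k i t = u t + w t"
  shows "easy_repair k E i"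
proof -
  obtain ju jw where ju: "ju < code_len k" "g k ju = u" and jw: "jw < code_len k" "g k jw = w"
    using assms(3,4) nth_index_of_gen_col by metis
  then have "ju \<noteq> jw" "ju \<notin> E" "jw \<notin> E"
    using assms(5-7) by auto
  with ju jw assms(1,2,8) have "related k i {ju, jw}" "{ju, jw} \<subseteq> live k E"
    by (auto simp: related_def live_def)
  then show ?thesis
    unfolding easy_repair_def using \<open>ju \<noteq> jw\<close> by (intro exI[of _ "{ju, jw}"]) simp
qed

theorem theorem4p2:
  fixes k :: nat and E :: "nat set"
  assumes "k \<ge> 2"
    and "E \<subseteq> {..<code_len k}"
    and "card E \<le> k - 1"
  shows "parallel_easy_repair k E"
  unfolding parallel_easy_repair_def
proof
  fix i assume "i \<in> E"
  then have i: "i < code_len k" using assms(2) by blast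
  have "finite E" using assms(2) finite_subset by blast
  let ?F = "g k ` (E - {i})"
  have "card ?F < k - 1"
    using card_image_le[of "E - {i}" "g k"] \<open>finite E\<close> \<open>i \<in> E\<close> assms(1,3) by simp
  moreover have "g k i \<in> set (gen_cols k)" using i by (simp add: g_def code_len_def)
  moreover have "insert (g k i) ?F = g k ` E" using \<open>i \<in> E\<close> by blast
  ultimately obtain u w where "u \<in> set (gen_cols k)" "w \<in> set (gen_cols k)" "u \<noteq> w"
    "u \<notin> g k ` E" "w \<notin> g k ` E" "\<And>t. g k i t = u t + w t"
    using gen_col_split_avoiding[of "g k i" k ?F] \<open>finite E\<close> by (metis finite_Diff finite_imageI)
  with \<open>i \<in> E\<close> i show "easy_repair k E i" by (rule easy_repair_if_live_split)
qed

end
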